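(* Let $\Gamma=(\gamma_n)_{n\ge1}$ be distinct complex numbers with $\inf_n|\gamma_{n+1}|/|\gamma_n|>1$, and $v=(v_n)$ positive with $\sum_nv_n/(1+|\gamma_n|^2)<\infty$. Suppose that either $v_n=o(V_n)$ or $v_n/|\gamma_n|^2=o(P_n)$ as $n\to\infty$. If $\mu$ is a nonnegative measure on $\mathbb{C}$ with $\mu(\Gamma)=0$ such that $H_{(\Gamma,v)}$ is both bounded and bounded below from $\ell^2_v$ to $L^2(\mathbb{C},\mu)$, then there exist positive numbers $M$ and $\delta$ such that \[ \int_{D_n(v;M)}\frac{v_n\,d\mu(z)}{|z-\gamma_n|^2}\ge\delta \] for all but finitely many indices $n$.
   Context: $\ell^2_v=\{(a_n):\sum|a_n|^2v_n<\infty\}$; $H_{(\Gamma,v)}a(z)=\sum_na_nv_n/(z-\gamma_n)$ for $z\in\mathbb{C}\setminus\Gamma$. Bounded below means $\|H_{(\Gamma,v)}a\|_{L^2(\mu)}\ge c\|a\|_v$ for some $c>0$. $V_1=1$, $V_n=\sum_{j<n}v_j$; $P_n=\sum_{j>n}v_j/|\gamma_j|^2$. $\Omega_1=\{|z|<(|\gamma_1|+|\gamma_2|)/2\}$, $\Omega_n=\{(|\gamma_{n-1}|+|\gamma_n|)/2\le|z|<(|\gamma_n|+|\gamma_{n+1}|)/2\}$ ($n\ge2$). $D_n(v;M)=\{\lambda\in\Omega_n: Mv_n/|\lambda-\gamma_n|^2\ge\max(V_n/|\lambda|^2,P_n)\}$. *)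

theory Defs
  imports "HOL-Analysis.Analysis" "HOL-Probability.Probability" "HOL-Library.Landau_Symbols"
begin

text \<open>Indexing convention: the paper's index n = 1,2,3,... corresponds to index n-1 here,
  i.e. all sequences are indexed from 0.\<close>

definition l2v :: "(nat \<Rightarrow> real) \<Rightarrow> (nat \<Rightarrow> complex) set" where
  "l2v v = {a. summable (\<lambda>n. (cmod (a n))\<^sup>2 * v n)}"

definition normv2 :: "(nat \<Rightarrow> real) \<Rightarrow> (nat \<Rightarrow> complex) \<Rightarrow> real" where
  "normv2 v a = (\<Sum>n. (cmod (a n))\<^sup>2 * v n)"

definition Hop :: "(nat \<Rightarrow> complex) \<Rightarrow> (nat \<Rightarrow> real) \<Rightarrow> (nat \<Rightarrow> complex) \<Rightarrow> complex \<Rightarrow> complex" where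
  "Hop \<gamma> v a z = (\<Sum>n. a n * complex_of_real (v n) / (z - \<gamma> n))"

text \<open>V: paper's V_1 = 1, V_n = sum_{j<n} v_j; here V 0 = 1, V n = sum_{j<n} v j.\<close>
definition Vs :: "(nat \<Rightarrow> real) \<Rightarrow> nat \<Rightarrow> real" where
  "Vs v n = (if n = 0 then 1 else (\<Sum>j<n. v j))"

definition Ps :: "(nat \<Rightarrow> complex) \<Rightarrow> (nat \<Rightarrow> real) \<Rightarrow> nat \<Rightarrow> real" where
  "Ps \<gamma> v n = (\<Sum>j. v (j + Suc n) / (cmod (\<gamma> (j + Suc n)))\<^sup>2)"

definition Omega :: "(nat \<Rightarrow> complex) \<Rightarrow> nat \<Rightarrow> complex set" where
  "Omega \<gamma> n = (if n = 0 then {z. cmod z < (cmod (\<gamma> 0) + cmod (\<gamma> 1)) / 2}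
     else {z. (cmod (\<gamma> (n - 1)) + cmod (\<gamma> n)) / 2 \<le> cmod z \<and>
              cmod z < (cmod (\<gamma> n) + cmod (\<gamma> (Suc n))) / 2})"

text \<open>Values with division by zero are treated as +infinity, as in the paper:
  at lambda = gamma_n the left side is infinite (so gamma_n belongs to D_n),
  at lambda = 0 the term V_n/|lambda|^2 is infinite (so 0 does not belong to D_n).\<close>
definition Dset :: "(nat \<Rightarrow> complex) \<Rightarrow> (nat \<Rightarrow> real) \<Rightarrow> real \<Rightarrow> nat \<Rightarrow> complex set" where
  "Dset \<gamma> v M n = {z \<in> Omega \<gamma> n. z \<noteq> 0 \<and>
     (z = \<gamma> n \<or> M * v n / (cmod (z - \<gamma> n))\<^sup>2 \<ge> max (Vs v n / (cmod z)\<^sup>2) (Ps \<gamma> v n))}"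

end

theory Submission
  imports Defs
begin

text \<open>Let \<open>\<rho>\<^sub>n\<close> be the midpoint radius between \<open>|\<gamma>\<^sub>n|\<close> and \<open>|\<gamma>\<^sub>n\<^sub>+\<^sub>1|\<close>. Testing the lower bound
  on a unit vector gives \<open>c\<^sup>2 \<le> \<integral> v\<^sub>n/|z-\<gamma>\<^sub>n|\<^sup>2 d\<mu>\<close>. Testing the upper bound on the vectors
  \<open>(1)\<^sub>j\<^sub><\<^sub>n\<close> and \<open>(1/conj \<gamma>\<^sub>j)\<^sub>j\<^sub>>\<^sub>n\<close>, and using \<open>Re (x/(x-y)) \<ge> 1/2\<close> for \<open>|y| < |x|\<close>, gives
  \<open>\<integral>\<^bsub>|z|\<ge>\<rho>\<^sub>n\<^sub>-\<^sub>1\<^esub> V\<^sub>n/|z|\<^sup>2 d\<mu> \<le> 4C\<close> and \<open>P\<^sub>n \<mu>{|z| < \<rho>\<^sub>n} \<le> 4C\<close>. On \<open>\<Omega>\<^sub>n\<close> but outside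
  \<open>D\<^sub>n(v;M)\<close> the kernel is at most \<open>(V\<^sub>n/|z|\<^sup>2 + P\<^sub>n)/M\<close>, so that part of the integral is at most
  \<open>8C/M\<close>. Outside \<open>\<Omega>\<^sub>n\<close> the kernel is comparable to \<open>v\<^sub>n/|z|\<^sup>2\<close> or to \<open>v\<^sub>n/|\<gamma>\<^sub>n|\<^sup>2\<close>; by
  lacunarity and either growth hypothesis the two estimates above propagate along geometric
  recursions, which show that this part tends to zero. Choosing \<open>M\<close> large leaves at least
  \<open>c\<^sup>2/2\<close> for the integral over \<open>D\<^sub>n(v;M)\<close>.\<close>

lemma Re_divide_diff_ge_half:
  fixes x y :: complex
  assumes "cmod y < cmod x"
  shows "1/2 \<le> Re (x / (x - y))"
proof -
  define a where "a = Re x" define b where "b = Im x"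
  define c where "c = Re y" define d where "d = Im y"
  have lt: "c\<^sup>2 + d\<^sup>2 < a\<^sup>2 + b\<^sup>2"
  proof -
    have "(cmod y)\<^sup>2 < (cmod x)\<^sup>2" using assms by (intro power_strict_mono) auto
    thus ?thesis unfolding a_def b_def c_def d_def by (simp add: cmod_power2)
  qed
  have ne: "(a - c)\<^sup>2 + (b - d)\<^sup>2 > 0"
  proof -
    have "x \<noteq> y" using assms by auto
    hence "a \<noteq> c \<or> b \<noteq> d" unfolding a_def b_def c_def d_def using complex_eqI by blast
    thus ?thesis by (auto simp: sum_power2_gt_zero_iff)
  qed
  have e: "Re (x / (x - y)) = (a * (a - c) + b * (b - d)) / ((a - c)\<^sup>2 + (b - d)\<^sup>2)"
    unfolding a_def b_def c_def d_def by (simp add: Re_divide)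
  have "(a - c)\<^sup>2 + (b - d)\<^sup>2 \<le> 2 * (a * (a - c) + b * (b - d))"
    using lt by (simp add: power2_eq_square algebra_simps)
  thus ?thesis using ne unfolding e by (simp add: le_divide_eq)
qed

lemma ennreal_le_divide_of_mult_le:
  fixes X :: ennreal
  assumes a: "a > 0" and le: "ennreal a * X \<le> ennreal b"
  shows "X \<le> ennreal (b / a)"
proof (cases X)
  case (real x)
  hence "ennreal (a * x) \<le> ennreal b" using le a by (simp add: ennreal_mult)
  hence "a * x \<le> b \<or> a * x \<le> 0" by (auto simp: ennreal_le_iff2)
  hence "x \<le> b / a \<or> x = 0" using a real by (auto simp: field_simps mult_le_0_iff)
  thus ?thesis using real by (auto intro: ennreal_leI)
next
  case top
  thus ?thesis using le a by (simp add: ennreal_mult_top top_unique)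
qed

lemma ennreal_half_le_of_le_add:
  fixes D :: ennreal
  assumes "ennreal x \<le> D + ennreal y" and "0 \<le> y" and "y \<le> x / 2"
  shows "ennreal (x / 2) \<le> D"
proof (cases D)
  case (real d)
  hence "ennreal x \<le> ennreal (d + y)" using assms(1,2) by (metis ennreal_plus)
  hence "x \<le> d + y" using real assms(2) by (auto simp: ennreal_le_iff2 simp del: ennreal_plus)
  thus ?thesis using real assms(3) by (simp add: ennreal_leI)
qed simp

text \<open>One step of the geometric recursions: \<open>a\<close> is the new quantity, \<open>b\<close> and \<open>d\<close> the two
  old ones, and the margin \<open>1 - (1 + e)/q\<^sup>2\<close> absorbs the new contribution \<open>K\<close>.\<close>
lemma geometric_recursion_step:
  fixes a b d K B e q :: real
  assumes a: "a > 0" and b: "b > 0" and d: "d > 0"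
    and ab: "a \<le> (1 + e) * b" and ad: "q\<^sup>2 * a \<le> (1 + e) * d"
    and K: "K \<ge> 0" and q: "q > 0" and B: "B \<ge> 0"
    and BK: "K * (1 + e) \<le> B * (1 - (1 + e) / q\<^sup>2)"
  shows "K / b + B / d \<le> B / a"
proof -
  have q2: "q\<^sup>2 > 0" using q by simp
  have "K * a \<le> K * ((1 + e) * b)" using ab K by (rule mult_left_mono)
  hence 1: "K / b \<le> K * (1 + e) / a"
    using a b by (simp add: divide_simps mult.commute mult.left_commute)
  have "B * (q\<^sup>2 * a) \<le> B * ((1 + e) * d)" using ad B by (rule mult_left_mono)
  hence 2: "B / d \<le> B * ((1 + e) / q\<^sup>2) / a"
    using a d q2 by (simp add: divide_simps mult.commute mult.left_commute)
  have "(K * (1 + e) + B * ((1 + e) / q\<^sup>2)) / a \<le> B / a"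
    using BK a by (intro divide_right_mono) (simp_all add: algebra_simps)
  thus ?thesis using 1 2 by (simp add: add_divide_distrib)
qed

lemma summable_divide_square:
  fixes v x :: "nat \<Rightarrow> real"
  assumes sum: "summable (\<lambda>n. v n / (1 + (x n)\<^sup>2))"
    and v: "\<And>n. v n \<ge> 0" and x: "\<And>n. b \<le> x n" and b: "b > 0"
  shows "summable (\<lambda>n. v n / (x n)\<^sup>2)"
proof (rule summable_comparison_test'[OF summable_mult[OF sum, of "1 + 1 / b\<^sup>2"]])
  fix n
  have xp: "x n > 0" using x[of n] b by linarith
  have "1 + (x n)\<^sup>2 \<noteq> 0" by (smt (verit) zero_le_power2)
  have xb: "b\<^sup>2 \<le> (x n)\<^sup>2" using x[of n] b by (intro power_mono) auto
  hence "1 / (x n)\<^sup>2 \<le> 1 / b\<^sup>2" using b xp by (intro divide_left_mono) auto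
  hence "(1 + (x n)\<^sup>2) / (x n)\<^sup>2 \<le> 1 + 1 / b\<^sup>2"
    using xp by (simp add: add_divide_distrib)
  hence "(1 + (x n)\<^sup>2) / (x n)\<^sup>2 * (v n / (1 + (x n)\<^sup>2)) \<le> (1 + 1 / b\<^sup>2) * (v n / (1 + (x n)\<^sup>2))"
    using v[of n] by (intro mult_right_mono) (auto intro: add_nonneg_nonneg)
  moreover have "(1 + (x n)\<^sup>2) / (x n)\<^sup>2 * (v n / (1 + (x n)\<^sup>2)) = v n / (x n)\<^sup>2"
    using xp \<open>1 + (x n)\<^sup>2 \<noteq> 0\<close> by simp
  ultimately show "norm (v n / (x n)\<^sup>2) \<le> (1 + 1 / b\<^sup>2) * (v n / (1 + (x n)\<^sup>2))"
    using v[of n] by simp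
qed

lemma eventually_le_ennreal_of_small_ratio:
  assumes bound: "\<forall>\<^sub>F n in F. x n \<le> ennreal (K * r n)" and K: "K \<ge> 0"
    and small: "\<And>d. d > 0 \<Longrightarrow> \<forall>\<^sub>F n in F. r n \<le> d" and e: "e > 0"
  shows "\<forall>\<^sub>F n in F. x n \<le> ennreal e"
proof -
  have "e / (K + 1) > 0" using K e by simp
  from bound small[OF this] show ?thesis
  proof eventually_elim
    case (elim n)
    have "K * r n \<le> K * (e / (K + 1))" using elim(2) K by (rule mult_left_mono)
    also have "\<dots> \<le> e" using K e by (simp add: field_simps)
    finally show ?case using elim(1) by (meson ennreal_leI order_trans)
  qed
qed

lemma smallo_imp_eventually_divide_le:
  fixes f h :: "nat \<Rightarrow> real"
  assumes "f \<in> o(h)" and "\<And>n. h n > 0" and "e > 0"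
  shows "\<forall>\<^sub>F n in sequentially. f n / h n \<le> e"
  using landau_o.smallD[OF assms(1,3)]
proof eventually_elim
  case (elim n)
  thus ?case using assms(2)[of n] by (simp add: divide_le_eq)
qed

lemma ennreal_add_mult_right:
  "0 \<le> a \<Longrightarrow> 0 \<le> b \<Longrightarrow> 0 \<le> r \<Longrightarrow> ennreal (a * r) + ennreal (b * r) = ennreal ((a + b) * r)"
  by (simp add: distrib_right)

lemma Hop_finite_support:
  assumes "finite S" and "\<And>j. j \<notin> S \<Longrightarrow> a j = 0"
  shows "Hop \<gamma> v a z = (\<Sum>j\<in>S. a j * complex_of_real (v j) / (z - \<gamma> j))"
  unfolding Hop_def by (rule sums_unique[symmetric], rule sums_finite) (use assms in auto)

lemma finite_support_l2v:
  assumes "finite S" and "\<And>j. j \<notin> S \<Longrightarrow> a j = 0"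
  shows "a \<in> l2v v" and "normv2 v a = (\<Sum>j\<in>S. (cmod (a j))\<^sup>2 * v j)"
proof -
  have "(\<lambda>j. (cmod (a j))\<^sup>2 * v j) sums (\<Sum>j\<in>S. (cmod (a j))\<^sup>2 * v j)"
    by (rule sums_finite) (use assms in auto)
  thus "a \<in> l2v v" "normv2 v a = (\<Sum>j\<in>S. (cmod (a j))\<^sup>2 * v j)"
    by (auto simp: l2v_def normv2_def sums_iff)
qed

lemma norm_sum_cauchy_ge:
  fixes w :: "nat \<Rightarrow> complex" and v :: "nat \<Rightarrow> real"
  assumes "finite S" and w: "\<And>j. j \<in> S \<Longrightarrow> cmod (w j) < cmod z" and v: "\<And>j. j \<in> S \<Longrightarrow> v j \<ge> 0"
  shows "(\<Sum>j\<in>S. v j) / (2 * cmod z) \<le> cmod (\<Sum>j\<in>S. complex_of_real (v j) / (z - w j))"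
proof -
  let ?S = "\<Sum>j\<in>S. complex_of_real (v j) / (z - w j)"
  define W where "W j = z / (z - w j)" for j
  have "z * ?S = (\<Sum>j\<in>S. complex_of_real (v j) * W j)"
    by (simp add: W_def sum_distrib_left algebra_simps)
  hence "Re (z * ?S) = (\<Sum>j\<in>S. v j * Re (W j))"
    by simp
  also have "\<dots> \<ge> (\<Sum>j\<in>S. v j * (1/2))"
    using Re_divide_diff_ge_half[OF w] v unfolding W_def by (intro sum_mono mult_left_mono) auto
  finally have "(\<Sum>j\<in>S. v j) / 2 \<le> Re (z * ?S)"
    by (simp add: sum_divide_distrib)
  also have "\<dots> \<le> cmod z * cmod ?S"
    using complex_Re_le_cmod[of "z * ?S"] by (simp add: norm_mult)
  finally show ?thesis
    by (cases "z = 0") (simp_all add: divide_le_eq mult.commute)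
qed

locale lacunary_frame =
  fixes \<gamma> :: "nat \<Rightarrow> complex" and v :: "nat \<Rightarrow> real" and \<mu> :: "complex measure"
    and q C c :: real
  assumes q_gt_1: "q > 1" and lacunary: "\<And>n. q * cmod (\<gamma> n) \<le> cmod (\<gamma> (Suc n))"
    and \<gamma>_nonzero: "\<And>n. \<gamma> n \<noteq> 0" and v_pos: "\<And>n. v n > 0"
    and summable_v: "summable (\<lambda>n. v n / (1 + (cmod (\<gamma> n))\<^sup>2))"
    and sets_\<mu>: "sets \<mu> = sets borel"
    and bounded: "\<And>a. a \<in> l2v v \<Longrightarrow>
       (\<integral>\<^sup>+ z. ennreal ((cmod (Hop \<gamma> v a z))\<^sup>2) \<partial>\<mu>) \<le> ennreal (C * normv2 v a)"
    and c_pos: "c > 0"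
    and bounded_below: "\<And>a. a \<in> l2v v \<Longrightarrow>
       ennreal (c\<^sup>2 * normv2 v a) \<le> (\<integral>\<^sup>+ z. ennreal ((cmod (Hop \<gamma> v a z))\<^sup>2) \<partial>\<mu>)"
begin

definition g where "g n = cmod (\<gamma> n)"
definition \<rho> where "\<rho> n = (g n + g (Suc n)) / 2"
abbreviation V where "V \<equiv> Vs v"
abbreviation P where "P \<equiv> Ps \<gamma> v"
abbreviation cauchy_kernel where "cauchy_kernel n z \<equiv> v n / (cmod (z - \<gamma> n))\<^sup>2"
abbreviation outer_mass where
  "outer_mass n \<equiv> \<integral>\<^sup>+ z \<in> {z. \<rho> n \<le> cmod z}. ennreal (cauchy_kernel n z) \<partial>\<mu>"
abbreviation inner_mass where
  "inner_mass n \<equiv> \<integral>\<^sup>+ z \<in> {z. cmod z < \<rho> (n - 1)}. ennreal (cauchy_kernel n z) \<partial>\<mu>"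

definition \<eta>\<^sub>o\<^sub>u\<^sub>t where "\<eta>\<^sub>o\<^sub>u\<^sub>t = (q - 1) / (q + 1)"
definition \<eta>\<^sub>i\<^sub>n where "\<eta>\<^sub>i\<^sub>n = (q - 1) / (2 * q)"

lemma eta_pos: "\<eta>\<^sub>o\<^sub>u\<^sub>t > 0" "\<eta>\<^sub>i\<^sub>n > 0"
  using q_gt_1 by (simp_all add: \<eta>\<^sub>o\<^sub>u\<^sub>t_def \<eta>\<^sub>i\<^sub>n_def)

lemma g_pos: "g n > 0" using \<gamma>_nonzero by (simp add: g_def)
lemma g_Suc: "q * g n \<le> g (Suc n)" using lacunary by (simp add: g_def)

lemma g_less_Suc: "g n < g (Suc n)"
proof -
  have "g n < q * g n" using q_gt_1 g_pos[of n] by simp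
  thus ?thesis using g_Suc[of n] by linarith
qed

lemma g_le: "m \<le> n \<Longrightarrow> g m \<le> g n"
  using strict_mono_less_eq[of g] g_less_Suc by (simp add: strict_mono_Suc_iff)

lemma g_pow: "q ^ k * g n \<le> g (n + k)"
proof (induction k)
  case (Suc k)
  have "q ^ Suc k * g n \<le> q * g (n + k)" using Suc q_gt_1 by simp
  also have "\<dots> \<le> g (n + Suc k)" using g_Suc[of "n + k"] by simp
  finally show ?case .
qed simp

lemma rho_gt: "g n < \<rho> n" using g_less_Suc[of n] by (simp add: \<rho>_def)
lemma rho_lt: "\<rho> n < g (Suc n)" using g_less_Suc[of n] by (simp add: \<rho>_def)
lemma rho_pos: "\<rho> n > 0" using rho_gt[of n] g_pos[of n] by linarith
lemma rho_le: "m \<le> n \<Longrightarrow> \<rho> m \<le> \<rho> n"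
  using g_le[of m n] g_le[of "Suc m" "Suc n"] by (simp add: \<rho>_def)

lemma rho_unbounded: "\<exists>k. x < \<rho> (n + k)"
proof -
  obtain k where k: "x / g 0 < q ^ k" using real_arch_pow[OF q_gt_1] by blast
  have "x < q ^ k * g 0" using k g_pos[of 0] by (simp add: divide_less_eq)
  also have "\<dots> \<le> g (0 + k)" by (rule g_pow)
  also have "\<dots> \<le> g (n + k)" by (rule g_le) simp
  also have "\<dots> < \<rho> (n + k)" by (rule rho_gt)
  finally show ?thesis by blast
qed

lemma Omega_eq: "n \<ge> 1 \<Longrightarrow> Omega \<gamma> n = {z. \<rho> (n - 1) \<le> cmod z \<and> cmod z < \<rho> n}"
  by (simp add: Omega_def \<rho>_def g_def)

lemma borel_measurable_\<mu>: "borel_measurable \<mu> = borel_measurable borel"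
  by (rule measurable_cong_sets[OF sets_\<mu> refl])

lemma Dset_sets[measurable]: "Dset \<gamma> v M n \<in> sets borel"
  unfolding Dset_def Omega_def by measurable

lemma summable_tail: "summable (\<lambda>j. v (j + k) / (g (j + k))\<^sup>2)"
proof -
  have "summable (\<lambda>j. v j / (g j)\<^sup>2)"
    using summable_divide_square[OF summable_v, of "g 0"] v_pos g_pos g_le
    by (simp add: g_def less_imp_le)
  thus ?thesis by (subst summable_iff_shift)
qed

lemma P_eq: "P n = (\<Sum>j. v (j + Suc n) / (g (j + Suc n))\<^sup>2)"
  by (simp add: Ps_def g_def)

definition P_summand where "P_summand n j = (if n < j then v j / (g j)\<^sup>2 else 0)"

lemma sums_P: "P_summand n sums P n"
proof -
  have "(\<lambda>j. P_summand n (j + Suc n)) sums P n"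
    unfolding P_eq P_summand_def using summable_tail[of "Suc n"] by (simp add: summable_sums)
  thus ?thesis using sums_iff_shift[of "P_summand n" "Suc n" "P n"] by (simp add: P_summand_def)
qed

lemma P_pos: "P n > 0"
  unfolding P_eq using summable_tail[of "Suc n"] v_pos g_pos
  by (intro suminf_pos) (auto intro!: divide_pos_pos simp: less_imp_neq[OF g_pos, symmetric])

lemma P_Suc: "P n = v (Suc n) / (g (Suc n))\<^sup>2 + P (Suc n)"
  unfolding P_eq using suminf_split_head[OF summable_tail[of "Suc n"]] by simp

lemma P_Suc_le: "P (Suc n) \<le> P n"
  using P_Suc[of n] v_pos[of "Suc n"] g_pos[of "Suc n"] by simp

lemma V_pos: "V n > 0"
  using v_pos by (auto simp: Vs_def intro!: sum_pos)

lemma V_Suc: "n \<ge> 1 \<Longrightarrow> V (Suc n) = V n + v n"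
  by (simp add: Vs_def)

definition unit_vec where "unit_vec n j = (if j = n then complex_of_real (1 / sqrt (v n)) else 0)"

lemma unit_vec_l2v: "unit_vec n \<in> l2v v" and normv2_unit_vec: "normv2 v (unit_vec n) = 1"
proof -
  have "(cmod (complex_of_real (1 / sqrt (v n))))\<^sup>2 = 1 / v n"
    using v_pos[of n] by (simp add: norm_divide power_divide)
  thus "unit_vec n \<in> l2v v" "normv2 v (unit_vec n) = 1"
    using finite_support_l2v[of "{n}" "unit_vec n" v] v_pos[of n] by (simp_all add: unit_vec_def)
qed

lemma norm_Hop_unit_vec: "(cmod (Hop \<gamma> v (unit_vec n) z))\<^sup>2 = cauchy_kernel n z"
proof -
  have "Hop \<gamma> v (unit_vec n) z = complex_of_real (1 / sqrt (v n)) * complex_of_real (v n) / (z - \<gamma> n)"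
    using Hop_finite_support[of "{n}" "unit_vec n" \<gamma> v z] by (simp add: unit_vec_def)
  thus ?thesis
    using v_pos[of n] by (simp add: norm_mult norm_divide power_divide power_mult_distrib)
      (simp add: power2_eq_square)
qed

lemma kernel_integral_ge: "ennreal (c\<^sup>2) \<le> (\<integral>\<^sup>+ z. ennreal (cauchy_kernel n z) \<partial>\<mu>)"
  using bounded_below[OF unit_vec_l2v] by (simp add: normv2_unit_vec norm_Hop_unit_vec)

lemma c_sq_le_C: "c\<^sup>2 \<le> C"
proof -
  have "ennreal (c\<^sup>2) \<le> ennreal C"
    using order_trans[OF bounded_below[OF unit_vec_l2v[of 0]] bounded[OF unit_vec_l2v[of 0]]]
    by (simp add: normv2_unit_vec)
  thus ?thesis using c_pos by (auto simp: ennreal_le_iff2)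
qed

lemma C_nonneg: "C \<ge> 0"
  using c_sq_le_C by (smt (verit) zero_le_power2)

lemma outer_V_integral_le:
  assumes n: "n \<ge> 1"
  shows "(\<integral>\<^sup>+ z \<in> {z. \<rho> (n - 1) \<le> cmod z}. ennreal (V n / (cmod z)\<^sup>2) \<partial>\<mu>) \<le> ennreal (4 * C)"
proof -
  define \<kappa> where "\<kappa> = 2 / sqrt (V n)"
  have Vp: "V n > 0" by (rule V_pos)
  have k2: "\<kappa>\<^sup>2 = 4 / V n" using Vp by (simp add: \<kappa>_def power_divide)
  define a where "a = (\<lambda>j. if j < n then complex_of_real \<kappa> else 0)"
  have a: "a \<in> l2v v" "normv2 v a = \<kappa>\<^sup>2 * V n"
    using n finite_support_l2v[of "{..<n}" a v] by (auto simp: a_def Vs_def sum_distrib_left)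
  hence nv: "normv2 v a = 4" using k2 Vp by simp
  have pw: "ennreal (V n / (cmod z)\<^sup>2) * indicator {z. \<rho> (n - 1) \<le> cmod z} z
            \<le> ennreal ((cmod (Hop \<gamma> v a z))\<^sup>2)" for z
  proof (cases "\<rho> (n - 1) \<le> cmod z")
    case True
    have zp: "cmod z > 0" using True rho_pos[of "n-1"] by linarith
    let ?S = "\<Sum>j<n. complex_of_real (v j) / (z - \<gamma> j)"
    have "cmod (\<gamma> j) < cmod z" if "j < n" for j
    proof -
      have "g j \<le> g (n - 1)" using that by (intro g_le) simp
      thus ?thesis using rho_gt[of "n - 1"] True by (simp add: g_def)
    qed
    hence "V n / (2 * cmod z) \<le> cmod ?S"
      using norm_sum_cauchy_ge[of "{..<n}" \<gamma> z v] v_pos n by (simp add: Vs_def less_imp_le)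
    hence "(V n / (2 * cmod z))\<^sup>2 \<le> (cmod ?S)\<^sup>2"
      using Vp zp by (intro power_mono) auto
    hence "\<kappa>\<^sup>2 * (V n / (2 * cmod z))\<^sup>2 \<le> \<kappa>\<^sup>2 * (cmod ?S)\<^sup>2"
      by (intro mult_left_mono) auto
    moreover have "\<kappa>\<^sup>2 * (V n / (2 * cmod z))\<^sup>2 = V n / (cmod z)\<^sup>2"
      using Vp zp unfolding k2 by (simp add: power2_eq_square field_simps)
    moreover have "Hop \<gamma> v a z = complex_of_real \<kappa> * ?S"
      using Hop_finite_support[of "{..<n}" a \<gamma> v z] by (simp add: a_def sum_distrib_left)
    ultimately show ?thesis
      using True by (simp add: ennreal_leI norm_mult power_mult_distrib)
  qed simp
  have "(\<integral>\<^sup>+ z \<in> {z. \<rho> (n - 1) \<le> cmod z}. ennreal (V n / (cmod z)\<^sup>2) \<partial>\<mu>)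
        \<le> (\<integral>\<^sup>+ z. ennreal ((cmod (Hop \<gamma> v a z))\<^sup>2) \<partial>\<mu>)"
    by (rule nn_integral_mono) (rule pw)
  also have "\<dots> \<le> ennreal (4 * C)"
    using bounded[OF a(1)] by (simp add: nv mult.commute)
  finally show ?thesis .
qed

lemma norm_tail_sum_ge:
  assumes z: "cmod z < \<rho> n"
  defines "s \<equiv> (\<lambda>j. if n < j then complex_of_real (v j) / (cnj (\<gamma> j) * (z - \<gamma> j)) else 0)"
  shows "summable s" and "P n / 2 \<le> cmod (suminf s)"
proof -
  define \<sigma> where "\<sigma> = cmod z / g (Suc n)"
  have gS: "g (Suc n) > 0" by (rule g_pos)
  have \<sigma>1: "\<sigma> < 1" using z rho_lt[of n] gS by (simp add: \<sigma>_def divide_less_eq)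
  have \<sigma>0: "\<sigma> \<ge> 0" using gS by (simp add: \<sigma>_def)
  have zle: "cmod z \<le> \<sigma> * g j" if "n < j" for j
  proof -
    have "cmod z = \<sigma> * g (Suc n)" using gS by (simp add: \<sigma>_def)
    also have "\<dots> \<le> \<sigma> * g j" using that \<sigma>0 by (intro mult_left_mono g_le) auto
    finally show ?thesis .
  qed
  have zlt: "cmod z < cmod (\<gamma> j)" if "n < j" for j
  proof -
    have "g (Suc n) \<le> g j" using that by (intro g_le) auto
    thus ?thesis using z rho_lt[of n] by (simp add: g_def)
  qed
  have norm_s: "norm (s j) \<le> P_summand n j / (1 - \<sigma>)" for j
  proof (cases "n < j")
    case True
    have gj: "g j > 0" by (rule g_pos)
    have "cmod (\<gamma> j) - cmod z \<le> cmod (z - \<gamma> j)" by (metis norm_minus_commute norm_triangle_ineq2)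
    hence d: "(1 - \<sigma>) * g j \<le> cmod (z - \<gamma> j)" using zle[OF True] by (simp add: g_def algebra_simps)
    have pos: "(1 - \<sigma>) * g j > 0" using \<sigma>1 gj by simp
    have "norm (s j) = v j / (g j * cmod (z - \<gamma> j))"
      using True v_pos[of j] by (simp add: s_def norm_divide norm_mult g_def)
    also have "\<dots> \<le> v j / (g j * ((1 - \<sigma>) * g j))"
    proof -
      have "cmod (z - \<gamma> j) > 0" using d pos by linarith
      thus ?thesis using d pos gj v_pos[of j] \<sigma>1 by (intro divide_left_mono mult_left_mono mult_pos_pos) auto
    qed
    also have "\<dots> = P_summand n j / (1 - \<sigma>)"
      using True \<sigma>1 by (simp add: P_summand_def power2_eq_square)
    finally show ?thesis .
  qed (simp add: s_def P_summand_def)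
  have st: "summable (P_summand n)" using sums_P by (rule sums_summable)
  show sm: "summable s"
    by (rule summable_comparison_test'[where N=0, OF summable_divide[OF st]]) (use norm_s in auto)
  have Re_s: "P_summand n j / 2 \<le> - Re (s j)" for j
  proof (cases "n < j")
    case True
    have ne: "z - \<gamma> j \<noteq> 0" "\<gamma> j - z \<noteq> 0" using zlt[OF True] by auto
    have cnj_\<gamma>: "cnj (\<gamma> j) = complex_of_real ((g j)\<^sup>2) / \<gamma> j"
      using complex_norm_square[of "\<gamma> j"] \<gamma>_nonzero[of j] by (simp add: g_def field_simps)
    define w where "w = \<gamma> j / (\<gamma> j - z)"
    have "s j = - complex_of_real (v j / (g j)\<^sup>2) * w"
      using True ne \<gamma>_nonzero[of j] g_pos[of j] by (simp add: s_def cnj_\<gamma> w_def field_simps)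
    hence "- Re (s j) = v j / (g j)\<^sup>2 * Re w" by simp
    hence "- Re (s j) = v j / (g j)\<^sup>2 * Re (\<gamma> j / (\<gamma> j - z))" by (simp add: w_def)
    also have "\<dots> \<ge> v j / (g j)\<^sup>2 * (1/2)"
      using Re_divide_diff_ge_half[OF zlt[OF True]] v_pos[of j] by (intro mult_left_mono) auto
    finally show ?thesis using True by (simp add: P_summand_def)
  qed (simp add: s_def P_summand_def)
  have "P n / 2 = (\<Sum>j. P_summand n j / 2)" using sums_P by (simp add: sums_iff suminf_divide)
  also have "\<dots> \<le> (\<Sum>j. - Re (s j))"
    using Re_s summable_divide[OF st] summable_minus[OF summable_Re[OF sm]] by (rule suminf_le)
  also have "\<dots> = - Re (suminf s)"
    using Re_suminf[OF sm] summable_Re[OF sm] by (simp add: suminf_minus)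
  also have "\<dots> \<le> cmod (suminf s)" using abs_Re_le_cmod[of "suminf s"] by linarith
  finally show "P n / 2 \<le> cmod (suminf s)" .
qed

lemma disc_P_integral_le:
  "(\<integral>\<^sup>+ z \<in> {z. cmod z < \<rho> n}. ennreal (P n) \<partial>\<mu>) \<le> ennreal (4 * C)"
proof -
  define \<kappa> where "\<kappa> = 2 / sqrt (P n)"
  have Pp: "P n > 0" by (rule P_pos)
  have k2: "\<kappa>\<^sup>2 = 4 / P n" using Pp by (simp add: \<kappa>_def power_divide)
  define a where "a = (\<lambda>j. if n < j then complex_of_real \<kappa> / cnj (\<gamma> j) else 0)"
  have "(\<lambda>j. (cmod (a j))\<^sup>2 * v j) = (\<lambda>j. \<kappa>\<^sup>2 * P_summand n j)"
    by (auto simp: a_def P_summand_def norm_divide power_divide g_def)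
  hence sums_a: "(\<lambda>j. (cmod (a j))\<^sup>2 * v j) sums 4"
    using sums_mult[OF sums_P[of n], of "\<kappa>\<^sup>2"] k2 Pp by simp
  have a: "a \<in> l2v v" "normv2 v a = 4"
    using sums_a by (auto simp: l2v_def normv2_def sums_iff)
  have pw: "ennreal (P n) * indicator {z. cmod z < \<rho> n} z \<le> ennreal ((cmod (Hop \<gamma> v a z))\<^sup>2)" for z
  proof (cases "cmod z < \<rho> n")
    case True
    define s where "s = (\<lambda>j. if n < j then complex_of_real (v j) / (cnj (\<gamma> j) * (z - \<gamma> j)) else 0)"
    have sm: "summable s" and lo: "P n / 2 \<le> cmod (suminf s)"
      using norm_tail_sum_ge[OF True] by (simp_all add: s_def)
    have "(\<lambda>j. a j * complex_of_real (v j) / (z - \<gamma> j)) = (\<lambda>j. complex_of_real \<kappa> * s j)"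
      by (auto simp: a_def s_def)
    hence "Hop \<gamma> v a z = complex_of_real \<kappa> * suminf s"
      unfolding Hop_def using suminf_mult[OF sm] by simp
    hence "(cmod (Hop \<gamma> v a z))\<^sup>2 = \<kappa>\<^sup>2 * (cmod (suminf s))\<^sup>2"
      by (simp add: norm_mult power_mult_distrib)
    moreover have "(P n / 2)\<^sup>2 \<le> (cmod (suminf s))\<^sup>2" using lo Pp by (intro power_mono) auto
    hence "\<kappa>\<^sup>2 * (P n / 2)\<^sup>2 \<le> \<kappa>\<^sup>2 * (cmod (suminf s))\<^sup>2" by (intro mult_left_mono) auto
    moreover have "\<kappa>\<^sup>2 * (P n / 2)\<^sup>2 = P n" using Pp unfolding k2 by (simp add: power2_eq_square)
    ultimately show ?thesis using True by (simp add: ennreal_leI)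
  qed simp
  have "(\<integral>\<^sup>+ z \<in> {z. cmod z < \<rho> n}. ennreal (P n) \<partial>\<mu>)
        \<le> (\<integral>\<^sup>+ z. ennreal ((cmod (Hop \<gamma> v a z))\<^sup>2) \<partial>\<mu>)"
    by (rule nn_integral_mono) (rule pw)
  also have "\<dots> \<le> ennreal (4 * C)" using bounded[OF a(1)] by (simp add: a(2) mult.commute)
  finally show ?thesis .
qed

lemma emeasure_disc_le: "emeasure \<mu> {z. cmod z < \<rho> n} \<le> ennreal (4 * C / P n)"
proof (rule ennreal_le_divide_of_mult_le[OF P_pos])
  show "ennreal (P n) * emeasure \<mu> {z. cmod z < \<rho> n} \<le> ennreal (4 * C)"
    using disc_P_integral_le[of n] by (simp add: nn_integral_cmult_indicator sets_\<mu>)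
qed

lemma kernel_le_outside:
  assumes "\<rho> n \<le> cmod z"
  shows "cauchy_kernel n z \<le> v n / (\<eta>\<^sub>o\<^sub>u\<^sub>t\<^sup>2 * (cmod z)\<^sup>2)"
proof -
  have zp: "cmod z > 0" using assms rho_pos[of n] by linarith
  have "g n * (1 + q) \<le> 2 * \<rho> n" using g_Suc[of n] by (simp add: \<rho>_def algebra_simps)
  hence "(q - 1) * cmod z \<le> (cmod z - g n) * (q + 1)" using assms by (simp add: algebra_simps)
  hence "\<eta>\<^sub>o\<^sub>u\<^sub>t * cmod z \<le> cmod z - g n" using q_gt_1 by (simp add: \<eta>\<^sub>o\<^sub>u\<^sub>t_def divide_le_eq mult.commute)
  also have "cmod z - g n \<le> cmod (z - \<gamma> n)" using norm_triangle_ineq2[of z "\<gamma> n"] by (simp add: g_def)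
  finally have dd: "\<eta>\<^sub>o\<^sub>u\<^sub>t * cmod z \<le> cmod (z - \<gamma> n)" .
  have p: "\<eta>\<^sub>o\<^sub>u\<^sub>t * cmod z > 0" using eta_pos zp by simp
  have "(\<eta>\<^sub>o\<^sub>u\<^sub>t * cmod z)\<^sup>2 \<le> (cmod (z - \<gamma> n))\<^sup>2" using dd p by (intro power_mono) auto
  hence "v n / (cmod (z - \<gamma> n))\<^sup>2 \<le> v n / (\<eta>\<^sub>o\<^sub>u\<^sub>t * cmod z)\<^sup>2"
    using p v_pos[of n] dd by (intro divide_left_mono mult_pos_pos) auto
  thus ?thesis by (simp add: power_mult_distrib)
qed

lemma kernel_le_inside:
  assumes n: "n \<ge> 1" and z: "cmod z < \<rho> (n - 1)"
  shows "cauchy_kernel n z \<le> v n / (\<eta>\<^sub>i\<^sub>n\<^sup>2 * (g n)\<^sup>2)"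
proof -
  have "q * g (n - 1) \<le> g n" using g_Suc[of "n - 1"] n by simp
  hence "2 * q * \<rho> (n - 1) \<le> (1 + q) * g n" using n by (simp add: \<rho>_def algebra_simps)
  hence "2 * q * cmod z \<le> (1 + q) * g n" using z q_gt_1 by (smt (verit) mult_left_mono)
  hence "(q - 1) * g n \<le> (g n - cmod z) * (2 * q)" by (simp add: algebra_simps)
  hence "\<eta>\<^sub>i\<^sub>n * g n \<le> g n - cmod z" using q_gt_1 by (simp add: \<eta>\<^sub>i\<^sub>n_def divide_le_eq mult.commute)
  also have "g n - cmod z \<le> cmod (z - \<gamma> n)"
    using norm_triangle_ineq2[of "\<gamma> n" z] by (simp add: g_def norm_minus_commute)
  finally have dd: "\<eta>\<^sub>i\<^sub>n * g n \<le> cmod (z - \<gamma> n)" .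
  have p: "\<eta>\<^sub>i\<^sub>n * g n > 0" using eta_pos g_pos[of n] by simp
  have "(\<eta>\<^sub>i\<^sub>n * g n)\<^sup>2 \<le> (cmod (z - \<gamma> n))\<^sup>2" using dd p by (intro power_mono) auto
  hence "v n / (cmod (z - \<gamma> n))\<^sup>2 \<le> v n / (\<eta>\<^sub>i\<^sub>n * g n)\<^sup>2"
    using p v_pos[of n] dd by (intro divide_left_mono mult_pos_pos) auto
  thus ?thesis by (simp add: power_mult_distrib)
qed

text \<open>The growth hypotheses enter only through \<open>V\<^sub>n\<^sub>+\<^sub>1 \<le> (1 + \<epsilon>) V\<^sub>n\<close> or
  \<open>P\<^sub>n \<le> (1 + \<epsilon>) P\<^sub>n\<^sub>+\<^sub>1\<close>; with this \<open>\<epsilon>\<close> the ratio \<open>(1 + \<epsilon>)/q\<^sup>2\<close> of the recursions stays below 1.\<close>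
definition \<epsilon> where "\<epsilon> = (q\<^sup>2 - 1) / 2"
definition B_geom where "B_geom = 4 * C * (1 + \<epsilon>) / (1 - (1 + \<epsilon>) / q\<^sup>2)"

lemma eps_pos: "\<epsilon> > 0"
  using q_gt_1 by (simp add: \<epsilon>_def one_less_power)

lemma recursion_ratio_lt_1: "(1 + \<epsilon>) / q\<^sup>2 < 1"
proof -
  have "q\<^sup>2 > 1" using q_gt_1 by (simp add: one_less_power)
  moreover from this have "1 + \<epsilon> < q\<^sup>2" by (simp add: \<epsilon>_def field_simps)
  ultimately show ?thesis by (simp add: divide_less_eq)
qed

lemma B_geom_nonneg: "B_geom \<ge> 0"
  using recursion_ratio_lt_1 eps_pos C_nonneg by (simp add: B_geom_def)

lemma B_geom_le: "B_geom \<le> B \<Longrightarrow> 4 * C * (1 + \<epsilon>) \<le> B * (1 - (1 + \<epsilon>) / q\<^sup>2)"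
  using recursion_ratio_lt_1 by (simp add: B_geom_def divide_le_eq)

lemma outer_mass_le_V:
  assumes "n \<ge> 1"
  shows "outer_mass n \<le> ennreal (4 * C / \<eta>\<^sub>o\<^sub>u\<^sub>t\<^sup>2 * (v n / V n))"
proof -
  define k where "k = v n / (\<eta>\<^sub>o\<^sub>u\<^sub>t\<^sup>2 * V (Suc n))"
  have k: "k \<ge> 0" using v_pos[of n] V_pos[of "Suc n"] by (simp add: k_def)
  have "outer_mass n \<le> (\<integral>\<^sup>+ z. ennreal k * (ennreal (V (Suc n) / (cmod z)\<^sup>2)
                                  * indicator {z. \<rho> (Suc n - 1) \<le> cmod z} z) \<partial>\<mu>)"
  proof (rule nn_integral_mono)
    fix z
    have "cauchy_kernel n z \<le> k * (V (Suc n) / (cmod z)\<^sup>2)" if "\<rho> n \<le> cmod z"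
      using kernel_le_outside[OF that] V_pos[of "Suc n"] by (simp add: k_def)
    thus "ennreal (cauchy_kernel n z) * indicator {z. \<rho> n \<le> cmod z} z
      \<le> ennreal k * (ennreal (V (Suc n) / (cmod z)\<^sup>2) * indicator {z. \<rho> (Suc n - 1) \<le> cmod z} z)"
      using k V_pos[of "Suc n"] by (simp add: indicator_def ennreal_leI flip: ennreal_mult)
  qed
  also have "\<dots> = ennreal k * (\<integral>\<^sup>+ z \<in> {z. \<rho> (Suc n - 1) \<le> cmod z}. ennreal (V (Suc n) / (cmod z)\<^sup>2) \<partial>\<mu>)"
    by (rule nn_integral_cmult) (unfold borel_measurable_\<mu>, measurable)
  also have "\<dots> \<le> ennreal k * ennreal (4 * C)"
    by (rule mult_left_mono[OF outer_V_integral_le]) auto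
  also have "\<dots> = ennreal (4 * C / \<eta>\<^sub>o\<^sub>u\<^sub>t\<^sup>2 * (v n / V (Suc n)))"
    using k C_nonneg by (simp add: ennreal_mult[symmetric] k_def ac_simps)
  also have "\<dots> \<le> ennreal (4 * C / \<eta>\<^sub>o\<^sub>u\<^sub>t\<^sup>2 * (v n / V n))"
    using V_Suc[OF assms] V_pos[of n] v_pos[of n] C_nonneg
    by (intro ennreal_leI mult_left_mono divide_left_mono) auto
  finally show ?thesis .
qed

lemma annulus_inv_sq_integral_le:
  "(\<integral>\<^sup>+ z \<in> {z. \<rho> n \<le> cmod z \<and> cmod z < \<rho> (Suc n)}. ennreal (1 / (cmod z)\<^sup>2) \<partial>\<mu>)
     \<le> ennreal (4 * C / ((\<rho> n)\<^sup>2 * P (Suc n)))"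
proof -
  have "(\<integral>\<^sup>+ z \<in> {z. \<rho> n \<le> cmod z \<and> cmod z < \<rho> (Suc n)}. ennreal (1 / (cmod z)\<^sup>2) \<partial>\<mu>)
      \<le> (\<integral>\<^sup>+ z \<in> {z. cmod z < \<rho> (Suc n)}. ennreal (1 / (\<rho> n)\<^sup>2) \<partial>\<mu>)"
  proof (rule nn_integral_mono)
    fix z
    have "1 / (cmod z)\<^sup>2 \<le> 1 / (\<rho> n)\<^sup>2" if "\<rho> n \<le> cmod z"
      using that rho_pos[of n] by (intro divide_left_mono power_mono mult_pos_pos) auto
    thus "ennreal (1 / (cmod z)\<^sup>2) * indicator {z. \<rho> n \<le> cmod z \<and> cmod z < \<rho> (Suc n)} z
        \<le> ennreal (1 / (\<rho> n)\<^sup>2) * indicator {z. cmod z < \<rho> (Suc n)} z"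
      by (simp add: indicator_def ennreal_leI)
  qed
  also have "\<dots> = ennreal (1 / (\<rho> n)\<^sup>2) * emeasure \<mu> {z. cmod z < \<rho> (Suc n)}"
    by (rule nn_integral_cmult_indicator) (simp add: sets_\<mu>)
  also have "\<dots> \<le> ennreal (1 / (\<rho> n)\<^sup>2) * ennreal (4 * C / P (Suc n))"
    by (rule mult_left_mono[OF emeasure_disc_le]) auto
  also have "\<dots> = ennreal (4 * C / ((\<rho> n)\<^sup>2 * P (Suc n)))"
    using C_nonneg P_pos[of "Suc n"] by (simp add: ennreal_mult[symmetric])
  finally show ?thesis .
qed

lemma P_recursion_step:
  assumes "P n \<le> (1 + \<epsilon>) * P (Suc n)"
  shows "4 * C / ((\<rho> n)\<^sup>2 * P (Suc n)) + B_geom / ((g (Suc n))\<^sup>2 * P (Suc n))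
           \<le> B_geom / ((g n)\<^sup>2 * P n)"
proof (rule geometric_recursion_step)
  have "(g n)\<^sup>2 \<le> (\<rho> n)\<^sup>2" using rho_gt[of n] g_pos[of n] by (intro power_mono) auto
  thus "(g n)\<^sup>2 * P n \<le> (1 + \<epsilon>) * ((\<rho> n)\<^sup>2 * P (Suc n))"
    using assms P_pos[of n] mult_mono[of "(g n)\<^sup>2" "(\<rho> n)\<^sup>2" "P n" "(1 + \<epsilon>) * P (Suc n)"]
    by (simp add: ac_simps)
  have "(q * g n)\<^sup>2 \<le> (g (Suc n))\<^sup>2"
    using g_Suc[of n] q_gt_1 g_pos[of n] by (intro power_mono) auto
  thus "q\<^sup>2 * ((g n)\<^sup>2 * P n) \<le> (1 + \<epsilon>) * ((g (Suc n))\<^sup>2 * P (Suc n))"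
    using assms P_pos[of n] mult_mono[of "q\<^sup>2 * (g n)\<^sup>2" "(g (Suc n))\<^sup>2" "P n" "(1 + \<epsilon>) * P (Suc n)"]
    by (simp add: ac_simps power_mult_distrib)
  show "(g n)\<^sup>2 * P n > 0" using g_pos[of n] P_pos[of n] by simp
  show "(\<rho> n)\<^sup>2 * P (Suc n) > 0" using rho_pos[of n] P_pos[of "Suc n"] by simp
  show "(g (Suc n))\<^sup>2 * P (Suc n) > 0" using g_pos[of "Suc n"] P_pos[of "Suc n"] by simp
qed (use C_nonneg B_geom_nonneg q_gt_1 B_geom_le in auto)

lemma annuli_inv_sq_integral_le:
  assumes P_growth: "\<And>m. N \<le> m \<Longrightarrow> P m \<le> (1 + \<epsilon>) * P (Suc m)" and "N \<le> n"
  shows "(\<integral>\<^sup>+ z \<in> {z. \<rho> n \<le> cmod z \<and> cmod z < \<rho> (n + k)}. ennreal (1 / (cmod z)\<^sup>2) \<partial>\<mu>)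
           \<le> ennreal (B_geom / ((g n)\<^sup>2 * P n))"
  using \<open>N \<le> n\<close>
proof (induction k arbitrary: n)
  case (Suc k)
  let ?f = "\<lambda>a b z. ennreal (1 / (cmod z)\<^sup>2) * indicator {z. a \<le> cmod z \<and> cmod z < b} z"
  have split: "?f (\<rho> n) (\<rho> (n + Suc k)) z = ?f (\<rho> n) (\<rho> (Suc n)) z + ?f (\<rho> (Suc n)) (\<rho> (Suc n + k)) z"
    for z using rho_le[of n "Suc n"] rho_le[of "Suc n" "Suc n + k"] by (auto simp: indicator_def)
  have "integral\<^sup>N \<mu> (?f (\<rho> n) (\<rho> (n + Suc k)))
      = integral\<^sup>N \<mu> (?f (\<rho> n) (\<rho> (Suc n))) + integral\<^sup>N \<mu> (?f (\<rho> (Suc n)) (\<rho> (Suc n + k)))"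
    unfolding split by (rule nn_integral_add) (unfold borel_measurable_\<mu>, measurable)+
  also have "\<dots> \<le> ennreal (4 * C / ((\<rho> n)\<^sup>2 * P (Suc n))) + ennreal (B_geom / ((g (Suc n))\<^sup>2 * P (Suc n)))"
    using annulus_inv_sq_integral_le[of n] Suc.IH[of "Suc n"] Suc.prems by (intro add_mono) auto
  also have "\<dots> \<le> ennreal (B_geom / ((g n)\<^sup>2 * P n))"
    using P_recursion_step[OF P_growth[OF Suc.prems]] C_nonneg B_geom_nonneg P_pos[of "Suc n"]
    by (simp flip: ennreal_plus add: ennreal_leI)
  finally show ?case .
qed simp

lemma outer_inv_sq_integral_le:
  assumes P_growth: "\<And>m. N \<le> m \<Longrightarrow> P m \<le> (1 + \<epsilon>) * P (Suc m)" and "N \<le> n"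
  shows "(\<integral>\<^sup>+ z \<in> {z. \<rho> n \<le> cmod z}. ennreal (1 / (cmod z)\<^sup>2) \<partial>\<mu>) \<le> ennreal (B_geom / ((g n)\<^sup>2 * P n))"
proof -
  define F where "F k z = ennreal (1 / (cmod z)\<^sup>2) * indicator {z. \<rho> n \<le> cmod z \<and> cmod z < \<rho> (n + k)} z" for k z
  have inc: "incseq F"
  proof (intro incseq_SucI le_funI)
    fix k z
    have "\<rho> (n + k) \<le> \<rho> (n + Suc k)" by (rule rho_le) simp
    thus "F k z \<le> F (Suc k) z" by (auto simp: F_def indicator_def)
  qed
  have meas: "F k \<in> borel_measurable \<mu>" for k unfolding F_def borel_measurable_\<mu> by measurable
  have pw: "ennreal (1 / (cmod z)\<^sup>2) * indicator {z. \<rho> n \<le> cmod z} z \<le> (SUP k. F k z)" for z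
  proof (cases "\<rho> n \<le> cmod z")
    case True
    obtain k where k: "cmod z < \<rho> (n + k)" using rho_unbounded by blast
    have "ennreal (1 / (cmod z)\<^sup>2) * indicator {z. \<rho> n \<le> cmod z} z = F k z"
      using True k by (simp add: F_def)
    also have "\<dots> \<le> (SUP k. F k z)" by (rule SUP_upper) simp
    finally show ?thesis .
  qed simp
  have "(\<integral>\<^sup>+ z \<in> {z. \<rho> n \<le> cmod z}. ennreal (1 / (cmod z)\<^sup>2) \<partial>\<mu>) \<le> (\<integral>\<^sup>+ z. (SUP k. F k z) \<partial>\<mu>)"
    by (rule nn_integral_mono) (rule pw)
  also have "\<dots> = (SUP k. integral\<^sup>N \<mu> (F k))"
    by (rule nn_integral_monotone_convergence_SUP[OF inc meas])
  also have "\<dots> \<le> ennreal (B_geom / ((g n)\<^sup>2 * P n))"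
    using annuli_inv_sq_integral_le[OF assms] by (intro SUP_least) (simp add: F_def[abs_def])
  finally show ?thesis .
qed

lemma outer_mass_le_P:
  assumes P_growth: "\<And>m. N \<le> m \<Longrightarrow> P m \<le> (1 + \<epsilon>) * P (Suc m)" and "N \<le> n"
  shows "outer_mass n \<le> ennreal (B_geom / \<eta>\<^sub>o\<^sub>u\<^sub>t\<^sup>2 * (v n / ((g n)\<^sup>2 * P n)))"
proof -
  define k where "k = v n / \<eta>\<^sub>o\<^sub>u\<^sub>t\<^sup>2"
  have k: "k \<ge> 0" using v_pos[of n] by (simp add: k_def)
  have "outer_mass n \<le> (\<integral>\<^sup>+ z. ennreal k * (ennreal (1 / (cmod z)\<^sup>2) * indicator {z. \<rho> n \<le> cmod z} z) \<partial>\<mu>)"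
  proof (rule nn_integral_mono)
    fix z
    have "cauchy_kernel n z \<le> k * (1 / (cmod z)\<^sup>2)" if "\<rho> n \<le> cmod z"
      using kernel_le_outside[OF that] by (simp add: k_def)
    thus "ennreal (cauchy_kernel n z) * indicator {z. \<rho> n \<le> cmod z} z
      \<le> ennreal k * (ennreal (1 / (cmod z)\<^sup>2) * indicator {z. \<rho> n \<le> cmod z} z)"
      using k by (simp add: indicator_def ennreal_leI flip: ennreal_mult)
  qed
  also have "\<dots> = ennreal k * (\<integral>\<^sup>+ z \<in> {z. \<rho> n \<le> cmod z}. ennreal (1 / (cmod z)\<^sup>2) \<partial>\<mu>)"
    by (rule nn_integral_cmult) (unfold borel_measurable_\<mu>, measurable)
  also have "\<dots> \<le> ennreal k * ennreal (B_geom / ((g n)\<^sup>2 * P n))"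
    by (rule mult_left_mono[OF outer_inv_sq_integral_le[OF assms]]) auto
  also have "\<dots> = ennreal (B_geom / \<eta>\<^sub>o\<^sub>u\<^sub>t\<^sup>2 * (v n / ((g n)\<^sup>2 * P n)))"
    using k B_geom_nonneg g_pos[of n] P_pos[of n] by (simp add: ennreal_mult[symmetric] k_def ac_simps)
  finally show ?thesis .
qed

lemma inner_mass_le:
  assumes "n \<ge> 1"
  shows "inner_mass n \<le> ennreal (v n / (\<eta>\<^sub>i\<^sub>n\<^sup>2 * (g n)\<^sup>2)) * emeasure \<mu> {z. cmod z < \<rho> (n - 1)}"
proof -
  have "inner_mass n \<le> (\<integral>\<^sup>+ z \<in> {z. cmod z < \<rho> (n - 1)}. ennreal (v n / (\<eta>\<^sub>i\<^sub>n\<^sup>2 * (g n)\<^sup>2)) \<partial>\<mu>)"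
    using kernel_le_inside[OF assms] by (intro nn_integral_mono) (simp add: indicator_def ennreal_leI)
  also have "\<dots> = ennreal (v n / (\<eta>\<^sub>i\<^sub>n\<^sup>2 * (g n)\<^sup>2)) * emeasure \<mu> {z. cmod z < \<rho> (n - 1)}"
    by (rule nn_integral_cmult_indicator) (simp add: sets_\<mu>)
  finally show ?thesis .
qed

lemma inner_mass_le_P:
  assumes n: "n \<ge> 1"
  shows "inner_mass n \<le> ennreal (4 * C / \<eta>\<^sub>i\<^sub>n\<^sup>2 * (v n / ((g n)\<^sup>2 * P n)))"
proof -
  have "4 * C / P (n - 1) \<le> 4 * C / P n"
    using P_Suc_le[of "n - 1"] n P_pos[of n] C_nonneg by (intro divide_left_mono) auto
  hence disc: "emeasure \<mu> {z. cmod z < \<rho> (n - 1)} \<le> ennreal (4 * C / P n)"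
    using emeasure_disc_le[of "n - 1"] by (meson ennreal_leI order_trans)
  have "inner_mass n \<le> ennreal (v n / (\<eta>\<^sub>i\<^sub>n\<^sup>2 * (g n)\<^sup>2)) * ennreal (4 * C / P n)"
    using inner_mass_le[OF n] mult_left_mono[OF disc] by (meson order_trans zero_le)
  also have "\<dots> = ennreal (4 * C / \<eta>\<^sub>i\<^sub>n\<^sup>2 * (v n / ((g n)\<^sup>2 * P n)))"
    using v_pos[of n] C_nonneg P_pos[of n] by (simp add: ennreal_mult[symmetric] ac_simps)
  finally show ?thesis .
qed

lemma emeasure_annulus_le:
  "emeasure \<mu> {z. \<rho> m \<le> cmod z \<and> cmod z < \<rho> (Suc m)} \<le> ennreal (4 * C / (V (Suc m) / (\<rho> (Suc m))\<^sup>2))"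
proof (rule ennreal_le_divide_of_mult_le)
  show "V (Suc m) / (\<rho> (Suc m))\<^sup>2 > 0" using V_pos[of "Suc m"] rho_pos[of "Suc m"] by simp
  have "ennreal (V (Suc m) / (\<rho> (Suc m))\<^sup>2) * emeasure \<mu> {z. \<rho> m \<le> cmod z \<and> cmod z < \<rho> (Suc m)}
     = (\<integral>\<^sup>+ z \<in> {z. \<rho> m \<le> cmod z \<and> cmod z < \<rho> (Suc m)}. ennreal (V (Suc m) / (\<rho> (Suc m))\<^sup>2) \<partial>\<mu>)"
    by (rule nn_integral_cmult_indicator[symmetric]) (simp add: sets_\<mu>)
  also have "\<dots> \<le> (\<integral>\<^sup>+ z \<in> {z. \<rho> (Suc m - 1) \<le> cmod z}. ennreal (V (Suc m) / (cmod z)\<^sup>2) \<partial>\<mu>)"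
  proof (rule nn_integral_mono)
    fix z
    have "V (Suc m) / (\<rho> (Suc m))\<^sup>2 \<le> V (Suc m) / (cmod z)\<^sup>2" if "\<rho> m \<le> cmod z" "cmod z < \<rho> (Suc m)"
      using that rho_pos[of m] V_pos[of "Suc m"] by (intro divide_left_mono power_mono mult_pos_pos) auto
    thus "ennreal (V (Suc m) / (\<rho> (Suc m))\<^sup>2) * indicator {z. \<rho> m \<le> cmod z \<and> cmod z < \<rho> (Suc m)} z
      \<le> ennreal (V (Suc m) / (cmod z)\<^sup>2) * indicator {z. \<rho> (Suc m - 1) \<le> cmod z} z"
      by (simp add: indicator_def ennreal_leI)
  qed
  also have "\<dots> \<le> ennreal (4 * C)" by (rule outer_V_integral_le) simp
  finally show "ennreal (V (Suc m) / (\<rho> (Suc m))\<^sup>2) * emeasure \<mu> {z. \<rho> m \<le> cmod z \<and> cmod z < \<rho> (Suc m)}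
     \<le> ennreal (4 * C)" .
qed

lemma V_recursion_step:
  assumes V_growth: "V (Suc (Suc m)) \<le> (1 + \<epsilon>) * V (Suc m)" and B: "B_geom \<le> B"
  shows "4 * C / (V (Suc m) / (\<rho> (Suc m))\<^sup>2) + B / (V (Suc m) / (g (Suc m))\<^sup>2)
           \<le> B / (V (Suc (Suc m)) / (g (Suc (Suc m)))\<^sup>2)"
proof (rule geometric_recursion_step)
  have g: "g (Suc m) > 0" "g (Suc (Suc m)) > 0" "\<rho> (Suc m) > 0" using g_pos rho_pos by auto
  have "(\<rho> (Suc m))\<^sup>2 \<le> (g (Suc (Suc m)))\<^sup>2"
    using rho_lt[of "Suc m"] g by (intro power_mono) auto
  hence "V (Suc (Suc m)) * (\<rho> (Suc m))\<^sup>2 \<le> ((1 + \<epsilon>) * V (Suc m)) * (g (Suc (Suc m)))\<^sup>2"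
    using V_growth V_pos[of "Suc (Suc m)"] by (intro mult_mono) auto
  thus "V (Suc (Suc m)) / (g (Suc (Suc m)))\<^sup>2 \<le> (1 + \<epsilon>) * (V (Suc m) / (\<rho> (Suc m))\<^sup>2)"
    using g by (simp add: field_simps)
  have "(q * g (Suc m))\<^sup>2 \<le> (g (Suc (Suc m)))\<^sup>2"
    using g_Suc[of "Suc m"] q_gt_1 g by (intro power_mono) auto
  hence "(q\<^sup>2 * (g (Suc m))\<^sup>2) * V (Suc (Suc m)) \<le> (g (Suc (Suc m)))\<^sup>2 * ((1 + \<epsilon>) * V (Suc m))"
    using V_growth V_pos[of "Suc (Suc m)"] by (intro mult_mono) (auto simp: power_mult_distrib)
  thus "q\<^sup>2 * (V (Suc (Suc m)) / (g (Suc (Suc m)))\<^sup>2) \<le> (1 + \<epsilon>) * (V (Suc m) / (g (Suc m))\<^sup>2)"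
    using g by (simp add: field_simps)
  show "V (Suc (Suc m)) / (g (Suc (Suc m)))\<^sup>2 > 0" "V (Suc m) / (\<rho> (Suc m))\<^sup>2 > 0"
    "V (Suc m) / (g (Suc m))\<^sup>2 > 0" using V_pos g by simp_all
qed (use C_nonneg B_geom_nonneg q_gt_1 B_geom_le[OF B] B in auto)

lemma emeasure_disc_le_V:
  assumes V_growth: "\<And>m. N \<le> m \<Longrightarrow> V (Suc m) \<le> (1 + \<epsilon>) * V m" and B: "B_geom \<le> B"
    and start: "4 * C / P N \<le> B / (V (Suc N) / (g (Suc N))\<^sup>2)"
  shows "N \<le> m \<Longrightarrow> emeasure \<mu> {z. cmod z < \<rho> m} \<le> ennreal (B / (V (Suc m) / (g (Suc m))\<^sup>2))"
proof (induction m rule: nat_induct_at_least)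
  case base
  show ?case using emeasure_disc_le[of N] start by (meson ennreal_leI order_trans)
next
  case (Suc m)
  have "emeasure \<mu> {z. cmod z < \<rho> (Suc m)}
      \<le> emeasure \<mu> ({z. cmod z < \<rho> m} \<union> {z. \<rho> m \<le> cmod z \<and> cmod z < \<rho> (Suc m)})"
    by (rule emeasure_mono) (auto simp: sets_\<mu>)
  also have "\<dots> \<le> emeasure \<mu> {z. cmod z < \<rho> m} + emeasure \<mu> {z. \<rho> m \<le> cmod z \<and> cmod z < \<rho> (Suc m)}"
    by (rule emeasure_subadditive) (simp_all add: sets_\<mu>)
  also have "\<dots> \<le> ennreal (B / (V (Suc m) / (g (Suc m))\<^sup>2)) + ennreal (4 * C / (V (Suc m) / (\<rho> (Suc m))\<^sup>2))"
    by (rule add_mono[OF Suc.IH emeasure_annulus_le])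
  also have "\<dots> \<le> ennreal (B / (V (Suc (Suc m)) / (g (Suc (Suc m)))\<^sup>2))"
    using V_recursion_step[OF V_growth[OF le_SucI[OF Suc.hyps]] B] C_nonneg B_geom_nonneg B V_pos[of "Suc m"]
    by (simp flip: ennreal_plus add: ennreal_leI add.commute)
  finally show ?case .
qed

lemma inner_mass_le_V:
  assumes V_growth: "\<And>m. N \<le> m \<Longrightarrow> V (Suc m) \<le> (1 + \<epsilon>) * V m" and B: "B_geom \<le> B"
    and start: "4 * C / P N \<le> B / (V (Suc N) / (g (Suc N))\<^sup>2)" and n: "Suc N \<le> n"
  shows "inner_mass n \<le> ennreal (B / \<eta>\<^sub>i\<^sub>n\<^sup>2 * (v n / V n))"
proof -
  have disc: "emeasure \<mu> {z. cmod z < \<rho> (n - 1)} \<le> ennreal (B / (V n / (g n)\<^sup>2))"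
    using emeasure_disc_le_V[OF V_growth B start, of "n - 1"] n by simp
  have "inner_mass n \<le> ennreal (v n / (\<eta>\<^sub>i\<^sub>n\<^sup>2 * (g n)\<^sup>2)) * emeasure \<mu> {z. cmod z < \<rho> (n - 1)}"
    by (rule inner_mass_le) (use n in simp)
  also have "\<dots> \<le> ennreal (v n / (\<eta>\<^sub>i\<^sub>n\<^sup>2 * (g n)\<^sup>2)) * ennreal (B / (V n / (g n)\<^sup>2))"
    by (rule mult_left_mono[OF disc]) simp
  also have "\<dots> = ennreal (B / \<eta>\<^sub>i\<^sub>n\<^sup>2 * (v n / V n))"
    using v_pos[of n] B B_geom_nonneg V_pos[of n] eta_pos g_pos[of n]
    by (simp add: ennreal_mult[symmetric] field_simps)
  finally show ?thesis .
qed

lemma off_annulus_mass_le_V: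
  assumes "(\<lambda>n. v n) \<in> o(\<lambda>n. V n)"
  obtains K where "K \<ge> 0" "\<forall>\<^sub>F n in sequentially. outer_mass n + inner_mass n \<le> ennreal (K * (v n / V n))"
proof -
  obtain N0 where N0: "\<And>n. N0 \<le> n \<Longrightarrow> v n / V n \<le> \<epsilon>"
    using smallo_imp_eventually_divide_le[OF assms V_pos eps_pos] by (auto simp: eventually_sequentially)
  define N where "N = max N0 1"
  have V_growth: "V (Suc m) \<le> (1 + \<epsilon>) * V m" if "N \<le> m" for m
    using N0[of m] that V_Suc[of m] V_pos[of m] by (simp add: N_def divide_le_eq algebra_simps)
  define d where "d = V (Suc N) / (g (Suc N))\<^sup>2"
  define B where "B = max B_geom (4 * C / P N * d)"
  have B: "B_geom \<le> B" by (simp add: B_def)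
  have "d > 0" using V_pos[of "Suc N"] g_pos[of "Suc N"] by (simp add: d_def)
  hence start: "4 * C / P N \<le> B / (V (Suc N) / (g (Suc N))\<^sup>2)"
    by (simp add: B_def le_divide_eq flip: d_def)
  define K where "K = 4 * C / \<eta>\<^sub>o\<^sub>u\<^sub>t\<^sup>2 + B / \<eta>\<^sub>i\<^sub>n\<^sup>2"
  show thesis
  proof (rule that)
    show K: "K \<ge> 0" using C_nonneg B B_geom_nonneg by (simp add: K_def)
    show "\<forall>\<^sub>F n in sequentially. outer_mass n + inner_mass n \<le> ennreal (K * (v n / V n))"
      unfolding eventually_sequentially
    proof (intro exI allI impI)
      fix n assume n: "Suc N \<le> n"
      have "outer_mass n + inner_mass n
          \<le> ennreal (4 * C / \<eta>\<^sub>o\<^sub>u\<^sub>t\<^sup>2 * (v n / V n)) + ennreal (B / \<eta>\<^sub>i\<^sub>n\<^sup>2 * (v n / V n))"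
        using n by (intro add_mono outer_mass_le_V inner_mass_le_V[OF V_growth B start]) auto
      also have "\<dots> = ennreal (K * (v n / V n))"
        unfolding K_def using v_pos[of n] V_pos[of n] C_nonneg B B_geom_nonneg
        by (intro ennreal_add_mult_right) auto
      finally show "outer_mass n + inner_mass n \<le> ennreal (K * (v n / V n))" .
    qed
  qed
qed

lemma off_annulus_mass_le_P:
  assumes "(\<lambda>n. v n / (cmod (\<gamma> n))\<^sup>2) \<in> o(\<lambda>n. P n)"
  obtains K where "K \<ge> 0"
    "\<forall>\<^sub>F n in sequentially. outer_mass n + inner_mass n \<le> ennreal (K * (v n / (cmod (\<gamma> n))\<^sup>2 / P n))"
proof -
  have ratio: "v n / (cmod (\<gamma> n))\<^sup>2 / P n = v n / ((g n)\<^sup>2 * P n)" for n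
    by (simp add: g_def)
  obtain N where N: "\<And>n. N \<le> n \<Longrightarrow> v n / ((g n)\<^sup>2 * P n) \<le> \<epsilon>"
    using smallo_imp_eventually_divide_le[OF assms P_pos eps_pos]
    by (auto simp: eventually_sequentially g_def)
  have P_growth: "P m \<le> (1 + \<epsilon>) * P (Suc m)" if "N \<le> m" for m
    using N[of "Suc m"] that P_Suc[of m] P_pos[of "Suc m"] g_pos[of "Suc m"]
    by (simp add: divide_le_eq algebra_simps)
  define K where "K = B_geom / \<eta>\<^sub>o\<^sub>u\<^sub>t\<^sup>2 + 4 * C / \<eta>\<^sub>i\<^sub>n\<^sup>2"
  show thesis
  proof (rule that)
    show "K \<ge> 0" using C_nonneg B_geom_nonneg by (simp add: K_def)
    show "\<forall>\<^sub>F n in sequentially. outer_mass n + inner_mass n \<le> ennreal (K * (v n / (cmod (\<gamma> n))\<^sup>2 / P n))"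
      unfolding eventually_sequentially ratio
    proof (intro exI allI impI)
      fix n assume n: "Suc N \<le> n"
      have r: "v n / ((g n)\<^sup>2 * P n) \<ge> 0" using v_pos[of n] P_pos[of n] by simp
      have "outer_mass n + inner_mass n
          \<le> ennreal (B_geom / \<eta>\<^sub>o\<^sub>u\<^sub>t\<^sup>2 * (v n / ((g n)\<^sup>2 * P n)))
            + ennreal (4 * C / \<eta>\<^sub>i\<^sub>n\<^sup>2 * (v n / ((g n)\<^sup>2 * P n)))"
        using n by (intro add_mono outer_mass_le_P[OF P_growth] inner_mass_le_P) auto
      also have "\<dots> = ennreal (K * (v n / ((g n)\<^sup>2 * P n)))"
        unfolding K_def using r C_nonneg B_geom_nonneg by (intro ennreal_add_mult_right) auto
      finally show "outer_mass n + inner_mass n \<le> ennreal (K * (v n / ((g n)\<^sup>2 * P n)))" .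
    qed
  qed
qed

lemma off_annulus_mass_small:
  assumes growth: "(\<lambda>n. v n) \<in> o(\<lambda>n. V n) \<or> (\<lambda>n. v n / (cmod (\<gamma> n))\<^sup>2) \<in> o(\<lambda>n. P n)"
    and e: "e > 0"
  shows "\<forall>\<^sub>F n in sequentially. outer_mass n + inner_mass n \<le> ennreal e"
  using growth
proof
  assume o: "(\<lambda>n. v n) \<in> o(\<lambda>n. V n)"
  obtain K where K: "K \<ge> 0"
    and bound: "\<forall>\<^sub>F n in sequentially. outer_mass n + inner_mass n \<le> ennreal (K * (v n / V n))"
    using off_annulus_mass_le_V[OF o] .
  show ?thesis
    by (rule eventually_le_ennreal_of_small_ratio[OF bound K smallo_imp_eventually_divide_le[OF o V_pos] e])
next
  assume o: "(\<lambda>n. v n / (cmod (\<gamma> n))\<^sup>2) \<in> o(\<lambda>n. P n)"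
  obtain K where K: "K \<ge> 0" and bound:
    "\<forall>\<^sub>F n in sequentially. outer_mass n + inner_mass n \<le> ennreal (K * (v n / (cmod (\<gamma> n))\<^sup>2 / P n))"
    using off_annulus_mass_le_P[OF o] .
  show ?thesis
    by (rule eventually_le_ennreal_of_small_ratio[OF bound K smallo_imp_eventually_divide_le[OF o P_pos] e])
qed

lemma kernel_le_off_Dset:
  assumes n: "n \<ge> 1" and M: "M > 0" and z: "z \<in> Omega \<gamma> n" "z \<notin> Dset \<gamma> v M n"
  shows "cauchy_kernel n z \<le> (V n / (cmod z)\<^sup>2 + P n) / M"
proof -
  have "z \<noteq> 0" using z(1) Omega_eq[OF n] rho_pos[of "n - 1"] by auto
  hence "M * v n / (cmod (z - \<gamma> n))\<^sup>2 < max (V n / (cmod z)\<^sup>2) (P n)"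
    using z by (auto simp: Dset_def not_le)
  also have "\<dots> \<le> V n / (cmod z)\<^sup>2 + P n" using V_pos[of n] P_pos[of n] by simp
  finally show ?thesis using M by (simp add: field_simps)
qed

lemma kernel_le_decomposition:
  assumes n: "n \<ge> 1" and M: "M > 0"
  shows "ennreal (cauchy_kernel n z) \<le>
     ennreal (cauchy_kernel n z) * indicator (Dset \<gamma> v M n) z +
     ennreal (1 / M) * (ennreal (V n / (cmod z)\<^sup>2) * indicator {z. \<rho> (n - 1) \<le> cmod z} z
                        + ennreal (P n) * indicator {z. cmod z < \<rho> n} z) +
     (ennreal (cauchy_kernel n z) * indicator {z. \<rho> n \<le> cmod z} z
      + ennreal (cauchy_kernel n z) * indicator {z. cmod z < \<rho> (n - 1)} z)"
  (is "?k \<le> ?D + ?Omega + ?off")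
proof -
  consider (inner) "cmod z < \<rho> (n - 1)" | (outer) "\<rho> n \<le> cmod z"
    | (annulus) "\<rho> (n - 1) \<le> cmod z" "cmod z < \<rho> n"
    by linarith
  thus ?thesis
  proof cases
    case inner
    hence "?k \<le> ?off" by (simp add: add_increasing)
    thus ?thesis by (rule add_increasing[OF zero_le])
  next
    case outer
    hence "?k \<le> ?off" by (simp add: add_increasing2)
    thus ?thesis by (rule add_increasing[OF zero_le])
  next
    case annulus
    have "?k \<le> ?D + ?Omega"
    proof (cases "z \<in> Dset \<gamma> v M n")
      case True
      thus ?thesis by (simp add: add_increasing2)
    next
      case False
      have "z \<in> Omega \<gamma> n" using annulus Omega_eq[OF n] by simp
      hence le: "cauchy_kernel n z \<le> 1 / M * (V n / (cmod z)\<^sup>2 + P n)"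
        using kernel_le_off_Dset[OF n M _ False] by simp
      have a: "0 \<le> V n / (cmod z)\<^sup>2" using V_pos[of n] by simp
      have b: "0 \<le> P n" using P_pos[of n] by simp
      have m: "0 \<le> 1 / M" using M by simp
      have "?Omega = ennreal (1 / M) * (ennreal (V n / (cmod z)\<^sup>2) + ennreal (P n))"
        using annulus by simp
      also have "\<dots> = ennreal (1 / M * (V n / (cmod z)\<^sup>2 + P n))"
        by (simp only: ennreal_plus[OF a b, symmetric] ennreal_mult[OF m add_nonneg_nonneg[OF a b], symmetric])
      finally have "?k \<le> ?Omega" using le by (simp add: ennreal_leI)
      thus ?thesis by (rule add_increasing[OF zero_le])
    qed
    thus ?thesis by (rule add_increasing2[OF zero_le])
  qed
qed

lemma kernel_integral_le:
  assumes n: "n \<ge> 1" and M: "M > 0"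
  shows "(\<integral>\<^sup>+ z. ennreal (cauchy_kernel n z) \<partial>\<mu>) \<le> (\<integral>\<^sup>+ z \<in> Dset \<gamma> v M n. ennreal (cauchy_kernel n z) \<partial>\<mu>)
           + ennreal (8 * C / M) + (outer_mass n + inner_mass n)"
proof -
  define f where "f z = ennreal (cauchy_kernel n z)" for z
  define D where "D z = f z * indicator (Dset \<gamma> v M n) z" for z
  define A where "A z = ennreal (V n / (cmod z)\<^sup>2) * indicator {z. \<rho> (n - 1) \<le> cmod z} z" for z
  define B where "B z = ennreal (P n) * indicator {z. cmod z < \<rho> n} z" for z
  define Out where "Out z = f z * indicator {z. \<rho> n \<le> cmod z} z" for z
  define In where "In z = f z * indicator {z. cmod z < \<rho> (n - 1)} z" for z
  have mD: "D \<in> borel_measurable \<mu>" unfolding D_def[abs_def] f_def borel_measurable_\<mu> by measurable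
  have mA: "A \<in> borel_measurable \<mu>" unfolding A_def[abs_def] borel_measurable_\<mu> by measurable
  have mB: "B \<in> borel_measurable \<mu>" unfolding B_def[abs_def] borel_measurable_\<mu> by measurable
  have mOut: "Out \<in> borel_measurable \<mu>" unfolding Out_def[abs_def] f_def borel_measurable_\<mu> by measurable
  have mIn: "In \<in> borel_measurable \<mu>" unfolding In_def[abs_def] f_def borel_measurable_\<mu> by measurable
  have mAB: "(\<lambda>z. ennreal (1 / M) * (A z + B z)) \<in> borel_measurable \<mu>"
    by (intro borel_measurable_times_ennreal borel_measurable_const borel_measurable_add mA mB)
  have "integral\<^sup>N \<mu> f \<le> (\<integral>\<^sup>+ z. (D z + ennreal (1 / M) * (A z + B z)) + (Out z + In z) \<partial>\<mu>)"
    unfolding f_def D_def A_def B_def Out_def In_def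
    by (rule nn_integral_mono) (rule kernel_le_decomposition[OF n M])
  also have "\<dots> = (\<integral>\<^sup>+ z. D z + ennreal (1 / M) * (A z + B z) \<partial>\<mu>) + (\<integral>\<^sup>+ z. Out z + In z \<partial>\<mu>)"
    by (rule nn_integral_add; intro borel_measurable_add mD mAB mOut mIn)
  also have "(\<integral>\<^sup>+ z. D z + ennreal (1 / M) * (A z + B z) \<partial>\<mu>)
      = integral\<^sup>N \<mu> D + ennreal (1 / M) * (integral\<^sup>N \<mu> A + integral\<^sup>N \<mu> B)"
    using nn_integral_add[OF mD mAB] nn_integral_cmult[OF borel_measurable_add[OF mA mB]]
      nn_integral_add[OF mA mB] by simp
  also have "(\<integral>\<^sup>+ z. Out z + In z \<partial>\<mu>) = outer_mass n + inner_mass n"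
    using nn_integral_add[OF mOut mIn] by (simp add: Out_def[abs_def] In_def[abs_def] f_def)
  also have "integral\<^sup>N \<mu> D = (\<integral>\<^sup>+ z \<in> Dset \<gamma> v M n. ennreal (cauchy_kernel n z) \<partial>\<mu>)"
    by (simp add: D_def[abs_def] f_def)
  finally have split: "integral\<^sup>N \<mu> f \<le> (\<integral>\<^sup>+ z \<in> Dset \<gamma> v M n. ennreal (cauchy_kernel n z) \<partial>\<mu>)
      + ennreal (1 / M) * (integral\<^sup>N \<mu> A + integral\<^sup>N \<mu> B) + (outer_mass n + inner_mass n)" .
  have "ennreal (1 / M) * (integral\<^sup>N \<mu> A + integral\<^sup>N \<mu> B) \<le> ennreal (1 / M) * (ennreal (4 * C) + ennreal (4 * C))"
    unfolding A_def B_def by (intro mult_left_mono add_mono outer_V_integral_le[OF n] disc_P_integral_le) simp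
  also have "\<dots> = ennreal (8 * C / M)"
    using M C_nonneg by (simp flip: ennreal_plus ennreal_mult)
  finally show ?thesis
    using split unfolding f_def by (meson add_mono order_refl order_trans)
qed

lemma Dset_integral_eventually_ge:
  assumes growth: "(\<lambda>n. v n) \<in> o(\<lambda>n. V n) \<or> (\<lambda>n. v n / (cmod (\<gamma> n))\<^sup>2) \<in> o(\<lambda>n. P n)"
  defines "M \<equiv> 32 * C / c\<^sup>2 + 1"
  shows "\<forall>\<^sub>F n in sequentially. ennreal (c\<^sup>2 / 2) \<le> (\<integral>\<^sup>+ z \<in> Dset \<gamma> v M n. ennreal (cauchy_kernel n z) \<partial>\<mu>)"
proof -
  have c2: "c\<^sup>2 > 0" using c_pos by simp
  have M: "M > 0" using C_nonneg c2 by (simp add: M_def add_nonneg_pos)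
  have "8 * C \<le> c\<^sup>2 / 4 * M" using c2 C_nonneg by (simp add: M_def field_simps)
  hence M_small: "8 * C / M \<le> c\<^sup>2 / 4" using M by (simp add: divide_le_eq)
  have "c\<^sup>2 / 4 > 0" using c2 by simp
  from off_annulus_mass_small[OF growth this] eventually_ge_at_top[of 1]
  show ?thesis
  proof eventually_elim
    case (elim n)
    let ?D = "\<integral>\<^sup>+ z \<in> Dset \<gamma> v M n. ennreal (cauchy_kernel n z) \<partial>\<mu>"
    have "ennreal (c\<^sup>2) \<le> ?D + ennreal (8 * C / M) + (outer_mass n + inner_mass n)"
      using kernel_integral_ge kernel_integral_le[OF elim(2) M] by (rule order_trans)
    also have "\<dots> \<le> ?D + ennreal (c\<^sup>2 / 4) + ennreal (c\<^sup>2 / 4)"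
      by (intro add_mono order_refl ennreal_leI M_small elim(1))
    also have "\<dots> = ?D + ennreal (c\<^sup>2 / 2)"
      using c2 ennreal_plus[of "c\<^sup>2 / 4" "c\<^sup>2 / 4"] by (simp only: add.assoc) simp
    finally show ?case by (rule ennreal_half_le_of_le_add) (use c2 in auto)
  qed
qed

end

theorem lemma7:
  fixes \<gamma> :: "nat \<Rightarrow> complex" and v :: "nat \<Rightarrow> real" and \<mu> :: "complex measure"
  assumes inj: "inj \<gamma>"
    and nz: "\<forall>n. \<gamma> n \<noteq> 0"
    and ratio: "\<exists>q>1. \<forall>n. cmod (\<gamma> (Suc n)) / cmod (\<gamma> n) \<ge> q"
    and vpos: "\<forall>n. v n > 0"
    and vsum: "summable (\<lambda>n. v n / (1 + (cmod (\<gamma> n))\<^sup>2))"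
    and growth: "(\<lambda>n. v n) \<in> o(\<lambda>n. Vs v n) \<or>
                 (\<lambda>n. v n / (cmod (\<gamma> n))\<^sup>2) \<in> o(\<lambda>n. Ps \<gamma> v n)"
    and borel: "sets \<mu> = sets borel"
    and null: "emeasure \<mu> (range \<gamma>) = 0"
    and bdd: "\<exists>C. \<forall>a \<in> l2v v.
       (\<integral>\<^sup>+ z. ennreal ((cmod (Hop \<gamma> v a z))\<^sup>2) \<partial>\<mu>) \<le> ennreal (C * normv2 v a)"
    and bdd_below: "\<exists>c>0. \<forall>a \<in> l2v v.
       (\<integral>\<^sup>+ z. ennreal ((cmod (Hop \<gamma> v a z))\<^sup>2) \<partial>\<mu>) \<ge> ennreal (c\<^sup>2 * normv2 v a)"
  shows "\<exists>M>0. \<exists>\<delta>>0. \<forall>\<^sub>F n in sequentially.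
     (\<integral>\<^sup>+ z \<in> Dset \<gamma> v M n. ennreal (v n / (cmod (z - \<gamma> n))\<^sup>2) \<partial>\<mu>) \<ge> ennreal \<delta>"
proof -
  obtain q where q: "q > 1" and rq: "\<forall>n. cmod (\<gamma> (Suc n)) / cmod (\<gamma> n) \<ge> q"
    using ratio by blast
  obtain C where C: "\<forall>a \<in> l2v v.
      (\<integral>\<^sup>+ z. ennreal ((cmod (Hop \<gamma> v a z))\<^sup>2) \<partial>\<mu>) \<le> ennreal (C * normv2 v a)"
    using bdd by blast
  obtain c where c: "c > 0" and cb: "\<forall>a \<in> l2v v.
      ennreal (c\<^sup>2 * normv2 v a) \<le> (\<integral>\<^sup>+ z. ennreal ((cmod (Hop \<gamma> v a z))\<^sup>2) \<partial>\<mu>)"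
    using bdd_below by blast
  have "lacunary_frame \<gamma> v \<mu> q C c"
  proof
    show "q * cmod (\<gamma> n) \<le> cmod (\<gamma> (Suc n))" for n
      using rq nz by (simp add: le_divide_eq)
  qed (use q nz vpos vsum borel C c cb in auto)
  hence "\<forall>\<^sub>F n in sequentially. ennreal (c\<^sup>2 / 2)
      \<le> (\<integral>\<^sup>+ z \<in> Dset \<gamma> v (32 * C / c\<^sup>2 + 1) n. ennreal (v n / (cmod (z - \<gamma> n))\<^sup>2) \<partial>\<mu>)"
    by (rule lacunary_frame.Dset_integral_eventually_ge) (use growth in simp)
  moreover have "32 * C / c\<^sup>2 + 1 > 0" "c\<^sup>2 / 2 > 0"
    using lacunary_frame.C_nonneg[OF \<open>lacunary_frame \<gamma> v \<mu> q C c\<close>] c by (simp_all add: add_nonneg_pos)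
  ultimately show ?thesis by blast
qed

end
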